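(* Let $U$ be an $N^2\times N^2$ complex matrix, with entries $U_{(i,j),(k,l)}$ indexed by pairs $i,j,k,l\in\{1,\dots,N\}$. Then $U$ is multiunitary if and only if the state $|\psi_U\rangle=\frac1N\sum_{i,j,k,l}U_{(i,j),(k,l)}|i\rangle|j\rangle|k\rangle|l\rangle$ is an AME(4,$N$) state, equivalently if and only if the array $|\psi_{ij}\rangle=\sum_{k,l}U_{(i,j),(k,l)}|k\rangle|l\rangle$ is a pair of orthogonal quantum Latin squares of size $N$. In particular every multiunitary matrix of size $N^2$ defines a pair of OQLS of size $N$, and every pair of OQLS $\{|\psi_{ij}\rangle\}$ defines the multiunitary matrix $U_{(i,j),(k,l)}=\langle k|\langle l|\psi_{ij}\rangle$.
   Context: For an $N^2\times N^2$ matrix $M$ with entries $M_{(i,j),(k,l)}$, its reshuffling is $M^R_{(i,j),(k,l)}=M_{(i,k),(j,l)}$ and its partial transpose is $M^\Gamma_{(i,j),(k,l)}=M_{(i,l),(k,j)}$. $U$ is multiunitary if $U$, $U^R$ and $U^\Gamma$ are all unitary. A pure state in $(\mathbb{C}^N)^{\otimes4}$ is AME(4,$N$) if its reduced density matrix on every pair of the four parties equals $\mathbb{I}_{N^2}/N^2$. An $N\times N$ array $\{|\psi_{ij}\rangle\}$ of vectors in $\mathbb{C}^N\otimes\mathbb{C}^N$ is a pair of orthogonal quantum Latin squares if: (1) it is an orthonormal basis of $\mathbb{C}^N\otimes\mathbb{C}^N$; (2) for each tensor factor $X$ and all $j,k$, $\mathrm{Tr}_X\sum_i|\psi_{ji}\rangle\langle\psi_{ki}|=\delta_{jk}\mathbb{I}_N$;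 (3) for each tensor factor $X$ and all $j,k$, $\mathrm{Tr}_X\sum_i|\psi_{ij}\rangle\langle\psi_{ik}|=\delta_{jk}\mathbb{I}_N$. *)

theory Defs
  imports Complex_Main "HOL-Library.Cardinality"
begin

text \<open>Computational basis of \<open>C^N\<close> is indexed by a finite type \<open>'n\<close>, \<open>N = CARD('n)\<close>.\<close>

type_synonym 'n mat2 = "'n \<times> 'n \<Rightarrow> 'n \<times> 'n \<Rightarrow> complex"
type_synonym 'n vec2 = "'n \<times> 'n \<Rightarrow> complex"
type_synonym 'n state4 = "'n \<times> 'n \<times> 'n \<times> 'n \<Rightarrow> complex"

definition unitary2 :: "('n::finite) mat2 \<Rightarrow> bool" where
  "unitary2 M \<longleftrightarrow>
     (\<forall>a b. (\<Sum>m\<in>UNIV. M a m * cnj (M b m)) = (if a = b then 1 else 0)) \<and>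
     (\<forall>a b. (\<Sum>m\<in>UNIV. cnj (M m a) * M m b) = (if a = b then 1 else 0))"

definition reshuffle :: "'n mat2 \<Rightarrow> 'n mat2" where
  "reshuffle M = (\<lambda>(i, j) (k, l). M (i, k) (j, l))"

definition partial_transpose :: "'n mat2 \<Rightarrow> 'n mat2" where
  "partial_transpose M = (\<lambda>(i, j) (k, l). M (i, l) (k, j))"

definition multiunitary :: "('n::finite) mat2 \<Rightarrow> bool" where
  "multiunitary U \<longleftrightarrow> unitary2 U \<and> unitary2 (reshuffle U) \<and> unitary2 (partial_transpose U)"

text \<open>Basis vector of the four-party space with party \<open>p\<close> in state \<open>a\<close>, \<open>q\<close> in \<open>b\<close>,
  \<open>r\<close> in \<open>c\<close> and the remaining party in \<open>d\<close> (parties numbered 0..3).\<close>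
definition fill4 :: "nat \<Rightarrow> nat \<Rightarrow> nat \<Rightarrow> 'n \<Rightarrow> 'n \<Rightarrow> 'n \<Rightarrow> 'n \<Rightarrow> 'n \<times> 'n \<times> 'n \<times> 'n" where
  "fill4 p q r a b c d =
     (let f = (\<lambda>t::nat. if t = p then a else if t = q then b else if t = r then c else d)
      in (f 0, f 1, f 2, f 3))"

text \<open>Matrix entry \<open>\<rho>_{(a,b),(a',b')}\<close> of the reduced density matrix of \<open>|\<psi>\<rangle>\<langle>\<psi>|\<close> on parties
  \<open>p,q\<close>, tracing out the complementary parties \<open>r,s\<close>.\<close>
definition reduced_pair :: "('n::finite) state4 \<Rightarrow> nat \<Rightarrow> nat \<Rightarrow> nat \<Rightarrow> 'n \<Rightarrow> 'n \<Rightarrow> 'n \<Rightarrow> 'n \<Rightarrow> complex" where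
  "reduced_pair \<psi> p q r a b a2 b2 =
     (\<Sum>c\<in>UNIV. \<Sum>d\<in>UNIV. \<psi> (fill4 p q r a b c d) * cnj (\<psi> (fill4 p q r a2 b2 c d)))"

definition AME4 :: "('n::finite) state4 \<Rightarrow> bool" where
  "AME4 (\<psi> :: 'n state4) \<longleftrightarrow>
     (\<forall>p q r s. {p, q, r, s} = {0, 1, 2, 3::nat} \<and> p < q \<and> r < s \<longrightarrow>
        (\<forall>a b a2 b2. reduced_pair \<psi> p q r a b a2 b2 =
             (if a = a2 \<and> b = b2 then 1 / (of_nat CARD('n))^2 else 0)))"

definition inner2 :: "('n::finite) vec2 \<Rightarrow> 'n vec2 \<Rightarrow> complex" where
  "inner2 v w = (\<Sum>x\<in>UNIV. cnj (v x) * w x)"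

text \<open>Partial traces of the operator \<open>\<Sum>_m |v m\<rangle>\<langle>w m|\<close> over the first / second factor,
  giving \<open>N \<times> N\<close> matrices.\<close>
definition ptrace1 :: "('m \<Rightarrow> ('n::finite) vec2) \<Rightarrow> ('m \<Rightarrow> 'n vec2) \<Rightarrow> 'm set \<Rightarrow> 'n \<Rightarrow> 'n \<Rightarrow> complex" where
  "ptrace1 v w I y y' = (\<Sum>m\<in>I. \<Sum>x\<in>UNIV. v m (x, y) * cnj (w m (x, y')))"

definition ptrace2 :: "('m \<Rightarrow> ('n::finite) vec2) \<Rightarrow> ('m \<Rightarrow> 'n vec2) \<Rightarrow> 'm set \<Rightarrow> 'n \<Rightarrow> 'n \<Rightarrow> complex" where
  "ptrace2 v w I x x' = (\<Sum>m\<in>I. \<Sum>y\<in>UNIV. v m (x, y) * cnj (w m (x', y)))"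

definition OQLS :: "('n::finite \<Rightarrow> 'n \<Rightarrow> 'n vec2) \<Rightarrow> bool" where
  "OQLS \<psi> \<longleftrightarrow>
     \<comment> \<open>(1) orthonormal basis of \<open>C^N \<otimes> C^N\<close>\<close>
     (\<forall>i j i' j'. inner2 (\<psi> i j) (\<psi> i' j') = (if i = i' \<and> j = j' then 1 else 0)) \<and>
     (\<forall>v. \<exists>c. v = (\<lambda>x. \<Sum>i\<in>UNIV. \<Sum>j\<in>UNIV. c i j * \<psi> i j x)) \<and>
     \<comment> \<open>(2) rows\<close>
     (\<forall>j k. (\<forall>y y'. ptrace1 (\<psi> j) (\<psi> k) UNIV y y' = (if j = k \<and> y = y' then 1 else 0)) \<and>
            (\<forall>x x'. ptrace2 (\<psi> j) (\<psi> k) UNIV x x' = (if j = k \<and> x = x' then 1 else 0))) \<and>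
     \<comment> \<open>(3) columns\<close>
     (\<forall>j k. (\<forall>y y'. ptrace1 (\<lambda>i. \<psi> i j) (\<lambda>i. \<psi> i k) UNIV y y' = (if j = k \<and> y = y' then 1 else 0)) \<and>
            (\<forall>x x'. ptrace2 (\<lambda>i. \<psi> i j) (\<lambda>i. \<psi> i k) UNIV x x' = (if j = k \<and> x = x' then 1 else 0)))"

definition state_of :: "('n::finite) mat2 \<Rightarrow> 'n state4" where
  "state_of (U :: 'n mat2) = (\<lambda>(i, j, k, l). U (i, j) (k, l) / of_nat CARD('n))"

definition array_of :: "'n mat2 \<Rightarrow> ('n \<Rightarrow> 'n \<Rightarrow> 'n vec2)" where
  "array_of U = (\<lambda>i j (k, l). U (i, j) (k, l))"

definition mat_of_array :: "('n \<Rightarrow> 'n \<Rightarrow> 'n vec2) \<Rightarrow> 'n mat2" where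
  "mat_of_array \<psi> = (\<lambda>(i, j) (k, l). \<psi> i j (k, l))"

end

theory Submission
  imports Defs
begin

text \<open>Regard \<open>U\<close> as a four-index tensor \<open>T i j k l = U (i, j) (k, l)\<close>. Each of the three
  conditions says that \<open>T\<close> has orthonormal rows for all six ways of choosing two of its indices
  as the row index. Unitarity of \<open>U\<close>, \<open>U\<^sup>R\<close> and \<open>U\<^sup>\<Gamma>\<close> (rows and columns) gives the six choices
  directly. The reduced density matrix of \<open>|\<psi>\<^sub>U\<rangle>\<close> on two parties is \<open>N\<^sup>-\<^sup>2\<close> times the Gram
  matrix of the corresponding rows. For the OQLS, orthonormality of the basis is the choice
  \<open>(i,j)\<close>, completeness of an orthonormal family is orthonormality of the columns, i.e. the
  choice \<open>(k,l)\<close>, and the four partial-trace conditions are the remaining choices.\<close>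

lemma sum_UNIV_prod:
  fixes g :: "'a::finite \<times> 'b::finite \<Rightarrow> 'c::comm_monoid_add"
  shows "(\<Sum>m\<in>UNIV. g m) = (\<Sum>c\<in>UNIV. \<Sum>d\<in>UNIV. g (c, d))"
  by (simp add: sum.cartesian_product)

lemma cnj_eq_indicator_iff: "cnj x = (if P then 1 else 0) \<longleftrightarrow> x = (if P then 1 else 0)"
  by (metis complex_cnj_cnj complex_cnj_one complex_cnj_zero)

definition orthonormal_rows :: "('a::finite \<Rightarrow> 'b::finite \<Rightarrow> complex) \<Rightarrow> bool" where
  "orthonormal_rows M \<longleftrightarrow> (\<forall>a a'. (\<Sum>m\<in>UNIV. M a m * cnj (M a' m)) = (if a = a' then 1 else 0))"

lemma unitary2_iff_orthonormal_rows:
  "unitary2 M \<longleftrightarrow> orthonormal_rows M \<and> orthonormal_rows (\<lambda>a b. M b a)"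
proof -
  have "(\<Sum>m\<in>UNIV. cnj (M m a) * M m b) = cnj (\<Sum>m\<in>UNIV. M m a * cnj (M m b))" for a b
    by (simp add: mult.commute)
  then show ?thesis
    unfolding unitary2_def orthonormal_rows_def by (simp only: cnj_eq_indicator_iff)
qed

lemma orthonormal_rows_reindex_rows:
  assumes "bij f"
  shows "orthonormal_rows (\<lambda>a. M (f a)) \<longleftrightarrow> orthonormal_rows M"
proof -
  have "inj f" "surj f"
    using assms by (simp_all add: bij_def)
  show ?thesis
    unfolding orthonormal_rows_def
  proof (intro iffI allI)
    fix b b'
    assume "\<forall>a a'. (\<Sum>m\<in>UNIV. M (f a) m * cnj (M (f a') m)) = (if a = a' then 1 else 0)"
    moreover obtain a a' where "b = f a" "b' = f a'"
      using \<open>surj f\<close> by (metis surjD)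
    ultimately show "(\<Sum>m\<in>UNIV. M b m * cnj (M b' m)) = (if b = b' then 1 else 0)"
      using \<open>inj f\<close> by (simp add: inj_eq)
  qed (simp add: \<open>inj f\<close> inj_eq)
qed

lemma orthonormal_rows_reindex_columns:
  assumes "bij g"
  shows "orthonormal_rows (\<lambda>a m. M a (g m)) \<longleftrightarrow> orthonormal_rows M"
proof -
  have "(\<Sum>m\<in>UNIV. M a (g m) * cnj (M a' (g m))) = (\<Sum>m\<in>UNIV. M a m * cnj (M a' m))" for a a'
    using sum.reindex_bij_betw[OF assms, of "\<lambda>m. M a m * cnj (M a' m)"]
    by simp
  then show ?thesis unfolding orthonormal_rows_def by simp
qed

lemma orthonormal_rows_pairs_iff:
  "orthonormal_rows M \<longleftrightarrow>
     (\<forall>a b a' b'. (\<Sum>c\<in>UNIV. \<Sum>d\<in>UNIV. M (a, b) (c, d) * cnj (M (a', b') (c, d))) =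
        (if a = a' \<and> b = b' then 1 else 0))"
  unfolding orthonormal_rows_def by (simp add: sum_UNIV_prod split_paired_All)

lemma orthonormal_rows_iff_inner2:
  "orthonormal_rows M \<longleftrightarrow> (\<forall>a a'. inner2 (M a) (M a') = (if a = a' then 1 else 0))"
proof -
  have "inner2 (M a) (M a') = cnj (\<Sum>m\<in>UNIV. M a m * cnj (M a' m))" for a a'
    unfolding inner2_def cnj_sum by (rule sum.cong) (simp_all add: mult.commute)
  then show ?thesis
    unfolding orthonormal_rows_def by (simp only: cnj_eq_indicator_iff)
qed

lemma orthonormal_columns_iff_rows_span:
  fixes M :: "'a::finite \<Rightarrow> 'b::finite \<Rightarrow> complex"
  assumes rows: "orthonormal_rows M"
  shows "orthonormal_rows (\<lambda>x m. M m x) \<longleftrightarrow> (\<forall>v. \<exists>c. v = (\<lambda>x. \<Sum>m\<in>UNIV. c m * M m x))"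
proof
  assume cols: "orthonormal_rows (\<lambda>x m. M m x)"
  show "\<forall>v. \<exists>c. v = (\<lambda>x. \<Sum>m\<in>UNIV. c m * M m x)"
  proof
    fix v :: "'b \<Rightarrow> complex"
    have "(\<Sum>m\<in>UNIV. (\<Sum>y\<in>UNIV. v y * cnj (M m y)) * M m x) = v x" for x
    proof -
      have "(\<Sum>m\<in>UNIV. (\<Sum>y\<in>UNIV. v y * cnj (M m y)) * M m x) =
            (\<Sum>m\<in>UNIV. \<Sum>y\<in>UNIV. v y * (M m x * cnj (M m y)))"
        by (simp add: sum_distrib_left sum_distrib_right mult_ac)
      also have "\<dots> = (\<Sum>y\<in>UNIV. v y * (\<Sum>m\<in>UNIV. M m x * cnj (M m y)))"
        by (subst sum.swap) (simp add: sum_distrib_left)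
      also have "\<dots> = (\<Sum>y\<in>UNIV. v y * (if x = y then 1 else 0))"
        using cols unfolding orthonormal_rows_def by simp
      also have "\<dots> = v x"
        by (simp add: if_distrib sum.delta cong: if_cong)
      finally show ?thesis .
    qed
    then show "\<exists>c. v = (\<lambda>x. \<Sum>m\<in>UNIV. c m * M m x)"
      by (intro exI[of _ "\<lambda>m. \<Sum>y\<in>UNIV. v y * cnj (M m y)"]) auto
  qed
next
  assume span: "\<forall>v. \<exists>c. v = (\<lambda>x. \<Sum>m\<in>UNIV. c m * M m x)"
  show "orthonormal_rows (\<lambda>x m. M m x)"
    unfolding orthonormal_rows_def
  proof (intro allI)
    fix x y
    obtain c where c: "(\<lambda>x'. if x' = y then 1 else 0 :: complex) = (\<lambda>x'. \<Sum>m\<in>UNIV. c m * M m x')"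
      using span by blast
    have "c b = cnj (M b y)" for b
    proof -
      have "cnj (M b y) = (\<Sum>x'\<in>UNIV. (if x' = y then 1 else 0) * cnj (M b x'))"
        by (simp add: if_distrib[where f = "\<lambda>t. t * _"] sum.delta' cong: if_cong)
      also have "\<dots> = (\<Sum>x'\<in>UNIV. \<Sum>m\<in>UNIV. c m * (M m x' * cnj (M b x')))"
        by (simp add: fun_cong[OF c] sum_distrib_left sum_distrib_right mult_ac)
      also have "\<dots> = (\<Sum>m\<in>UNIV. c m * (\<Sum>x'\<in>UNIV. M m x' * cnj (M b x')))"
        by (subst sum.swap) (simp add: sum_distrib_left)
      also have "\<dots> = (\<Sum>m\<in>UNIV. c m * (if m = b then 1 else 0))"
        using rows unfolding orthonormal_rows_def by simp
      also have "\<dots> = c b"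
        by (simp add: if_distrib sum.delta' cong: if_cong)
      finally show ?thesis by simp
    qed
    then show "(\<Sum>m\<in>UNIV. M m x * cnj (M m y)) = (if x = y then 1 else 0)"
      using fun_cong[OF c, of x] by (simp add: mult.commute)
  qed
qed

lemma row_span_pairs_iff:
  fixes f :: "'a::finite \<times> 'b::finite \<Rightarrow> 'c \<Rightarrow> complex"
  shows "(\<exists>c. v = (\<lambda>x. \<Sum>i\<in>UNIV. \<Sum>j\<in>UNIV. c i j * f (i, j) x)) \<longleftrightarrow>
         (\<exists>c. v = (\<lambda>x. \<Sum>m\<in>UNIV. c m * f m x))"
proof
  assume "\<exists>c. v = (\<lambda>x. \<Sum>i\<in>UNIV. \<Sum>j\<in>UNIV. c i j * f (i, j) x)"
  then obtain c where "v = (\<lambda>x. \<Sum>i\<in>UNIV. \<Sum>j\<in>UNIV. c i j * f (i, j) x)" ..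
  then show "\<exists>c. v = (\<lambda>x. \<Sum>m\<in>UNIV. c m * f m x)"
    by (intro exI[of _ "\<lambda>m. c (fst m) (snd m)"]) (simp add: sum_UNIV_prod)
next
  assume "\<exists>c. v = (\<lambda>x. \<Sum>m\<in>UNIV. c m * f m x)"
  then obtain c where "v = (\<lambda>x. \<Sum>m\<in>UNIV. c m * f m x)" ..
  then show "\<exists>c. v = (\<lambda>x. \<Sum>i\<in>UNIV. \<Sum>j\<in>UNIV. c i j * f (i, j) x)"
    by (intro exI[of _ "\<lambda>i j. c (i, j)"]) (simp add: sum_UNIV_prod)
qed

text \<open>Only orthonormal rows are required: for square matrices this already means unitarity.\<close>

definition perfect_tensor :: "('n::finite \<Rightarrow> 'n \<Rightarrow> 'n \<Rightarrow> 'n \<Rightarrow> complex) \<Rightarrow> bool" where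
  "perfect_tensor T \<longleftrightarrow>
     orthonormal_rows (\<lambda>(a, b) (c, d). T a b c d) \<and>
     orthonormal_rows (\<lambda>(a, c) (b, d). T a b c d) \<and>
     orthonormal_rows (\<lambda>(a, d) (b, c). T a b c d) \<and>
     orthonormal_rows (\<lambda>(b, c) (a, d). T a b c d) \<and>
     orthonormal_rows (\<lambda>(b, d) (a, c). T a b c d) \<and>
     orthonormal_rows (\<lambda>(c, d) (a, b). T a b c d)"

lemma multiunitary_iff_perfect_tensor:
  "multiunitary U \<longleftrightarrow> perfect_tensor (\<lambda>i j k l. U (i, j) (k, l))"
proof -
  \<comment> \<open>\<open>U\<^sup>\<Gamma>\<close> and its transpose give the splittings \<open>(a, d)\<close> and \<open>(b, c)\<close> only up to
    swapping the two indices of the column pair, resp. of the row pair.\<close>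
  have "orthonormal_rows (\<lambda>(a, d) (b, c). U (a, b) (c, d)) \<longleftrightarrow>
        orthonormal_rows (\<lambda>r m. partial_transpose U r (prod.swap m))"
    by (simp add: partial_transpose_def case_prod_beta')
  also have "\<dots> \<longleftrightarrow> orthonormal_rows (partial_transpose U)"
    by (rule orthonormal_rows_reindex_columns) simp
  finally have rows_pt: "orthonormal_rows (partial_transpose U) \<longleftrightarrow>
      orthonormal_rows (\<lambda>(a, d) (b, c). U (a, b) (c, d))" ..
  have "orthonormal_rows (\<lambda>(b, c) (a, d). U (a, b) (c, d)) \<longleftrightarrow>
        orthonormal_rows (\<lambda>r m. partial_transpose U m (prod.swap r))"
    by (simp add: partial_transpose_def case_prod_beta')
  also have "\<dots> \<longleftrightarrow> orthonormal_rows (\<lambda>r m. partial_transpose U m r)"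
    by (rule orthonormal_rows_reindex_rows) simp
  finally have cols_pt: "orthonormal_rows (\<lambda>r m. partial_transpose U m r) \<longleftrightarrow>
      orthonormal_rows (\<lambda>(b, c) (a, d). U (a, b) (c, d))" ..
  show ?thesis
    unfolding multiunitary_def unitary2_iff_orthonormal_rows perfect_tensor_def rows_pt cols_pt
    by (simp add: reshuffle_def case_prod_beta' conj_ac)
qed

lemma reduced_pair_maximally_mixed_iff:
  fixes \<psi> :: "('n::finite) state4"
  shows "(\<forall>a b a' b'. reduced_pair \<psi> p q r a b a' b' =
            (if a = a' \<and> b = b' then 1 / (of_nat CARD('n))^2 else 0)) \<longleftrightarrow>
         orthonormal_rows (\<lambda>(a, b) (c, d). of_nat CARD('n) * \<psi> (fill4 p q r a b c d))"
proof -
  have "(of_nat CARD('n) :: complex) \<noteq> 0" by simp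
  then show ?thesis
    unfolding orthonormal_rows_pairs_iff reduced_pair_def
    by (simp add: sum_distrib_left[symmetric] mult_ac power2_eq_square eq_divide_eq)
qed

lemma two_two_partitions_of_four:
  "{p, q, r, s} = {0, 1, 2, 3::nat} \<and> p < q \<and> r < s \<longleftrightarrow>
   (p, q, r, s) \<in> {(0, 1, 2, 3), (0, 2, 1, 3), (0, 3, 1, 2), (1, 2, 0, 3), (1, 3, 0, 2), (2, 3, 0, 1)}"
proof
  assume parts: "{p, q, r, s} = {0, 1, 2, 3::nat} \<and> p < q \<and> r < s"
  then have cover: "0 \<in> {p, q, r, s}" "1 \<in> {p, q, r, s}" "2 \<in> {p, q, r, s}" "3 \<in> {p, q, r, s}"
    by simp_all
  from parts have "p \<in> {0, 1, 2, 3}" "q \<in> {0, 1, 2, 3}" "r \<in> {0, 1, 2, 3}" "s \<in> {0, 1, 2, 3}"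
    by blast+
  then show "(p, q, r, s) \<in> {(0, 1, 2, 3), (0, 2, 1, 3), (0, 3, 1, 2), (1, 2, 0, 3), (1, 3, 0, 2), (2, 3, 0, 1)}"
    unfolding insert_iff empty_iff simp_thms by (elim disjE; use cover parts in simp)
qed auto

lemma AME4_iff_perfect_tensor:
  fixes \<psi> :: "('n::finite) state4"
  shows "AME4 \<psi> \<longleftrightarrow> perfect_tensor (\<lambda>i j k l. of_nat CARD('n) * \<psi> (i, j, k, l))"
  unfolding AME4_def two_two_partitions_of_four reduced_pair_maximally_mixed_iff
  by (simp add: perfect_tensor_def fill4_def all_conj_distrib)

lemma OQLS_array_of_iff_perfect_tensor:
  "OQLS (array_of U) \<longleftrightarrow> perfect_tensor (\<lambda>i j k l. U (i, j) (k, l))"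
proof -
  have entry: "array_of U i j = U (i, j)" for i j
    by (simp add: array_of_def)
  have orthonormal: "(\<forall>i j i' j'. inner2 (U (i, j)) (U (i', j')) =
      (if i = i' \<and> j = j' then 1 else 0)) \<longleftrightarrow> orthonormal_rows U"
    unfolding orthonormal_rows_iff_inner2 by (simp add: split_paired_All)
  have basis: "(\<forall>i j i' j'. inner2 (array_of U i j) (array_of U i' j') =
        (if i = i' \<and> j = j' then 1 else 0)) \<and>
      (\<forall>v. \<exists>c. v = (\<lambda>x. \<Sum>i\<in>UNIV. \<Sum>j\<in>UNIV. c i j * array_of U i j x)) \<longleftrightarrow>
      orthonormal_rows U \<and> orthonormal_rows (\<lambda>(c, d) (a, b). U (a, b) (c, d))"
  proof -
    have "(\<lambda>x m. U m x) = (\<lambda>(c, d) (a, b). U (a, b) (c, d))"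
      by auto
    then show ?thesis
      unfolding entry row_span_pairs_iff orthonormal
      using orthonormal_columns_iff_rows_span[of U] by auto
  qed
  have partial_traces: "(\<forall>j k y y'. ptrace1 (array_of U j) (array_of U k) UNIV y y' =
      (if j = k \<and> y = y' then 1 else 0)) \<longleftrightarrow> orthonormal_rows (\<lambda>(a, d) (b, c). U (a, b) (c, d))"
    "(\<forall>j k x x'. ptrace2 (array_of U j) (array_of U k) UNIV x x' =
      (if j = k \<and> x = x' then 1 else 0)) \<longleftrightarrow> orthonormal_rows (\<lambda>(a, c) (b, d). U (a, b) (c, d))"
    "(\<forall>j k y y'. ptrace1 (\<lambda>i. array_of U i j) (\<lambda>i. array_of U i k) UNIV y y' =
      (if j = k \<and> y = y' then 1 else 0)) \<longleftrightarrow> orthonormal_rows (\<lambda>(b, d) (a, c). U (a, b) (c, d))"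
    "(\<forall>j k x x'. ptrace2 (\<lambda>i. array_of U i j) (\<lambda>i. array_of U i k) UNIV x x' =
      (if j = k \<and> x = x' then 1 else 0)) \<longleftrightarrow> orthonormal_rows (\<lambda>(b, c) (a, d). U (a, b) (c, d))"
    unfolding orthonormal_rows_pairs_iff ptrace1_def ptrace2_def entry
    by (simp only: prod.case; blast)+
  show ?thesis
    unfolding OQLS_def all_conj_distrib conj_assoc[symmetric] basis partial_traces perfect_tensor_def
    by (simp add: conj_ac)
qed

theorem mainTheorem13:
  fixes U :: "('n::finite) mat2"
  shows "(multiunitary U \<longleftrightarrow> AME4 (state_of U))
       \<and> (multiunitary U \<longleftrightarrow> OQLS (array_of U))
       \<and> (multiunitary U \<longrightarrow> OQLS (array_of U))
       \<and> (\<forall>\<psi> :: 'n \<Rightarrow> 'n \<Rightarrow> 'n vec2. OQLS \<psi> \<longrightarrow> multiunitary (mat_of_array \<psi>))"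
proof -
  have multiunitary_iff_OQLS: "multiunitary V \<longleftrightarrow> OQLS (array_of V)" for V :: "'n mat2"
    by (simp add: multiunitary_iff_perfect_tensor OQLS_array_of_iff_perfect_tensor)
  have "multiunitary U \<longleftrightarrow> AME4 (state_of U)"
    by (simp add: multiunitary_iff_perfect_tensor AME4_iff_perfect_tensor state_of_def)
  moreover have "array_of (mat_of_array \<psi>) = \<psi>" for \<psi> :: "'n \<Rightarrow> 'n \<Rightarrow> 'n vec2"
    by (simp add: array_of_def mat_of_array_def)
  ultimately show ?thesis
    using multiunitary_iff_OQLS by metis
qed

end
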